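(* For all $m,n\ge1$, $$F_{m+1}(x,y,q)F_{n+1}(xq^m,yq^m,q)=xq^mF_{m+n+1}(x,y,q)+y^2q^{2m-1}F_{m-1}(x,y,q)F_{n-1}(xq^{m+2},yq^{m+2},q).$$
   Context: $\Pi_n(13/2,123)$ is the set of layered matchings of $[n]$: set partitions whose blocks are consecutive intervals $[1,i_1]/\dots/[i_{k-1}+1,n]$, each of size $1$ or $2$. $\Pi_0(13/2,123)$ consists of the empty partition. For $\pi=B_1/\dots/B_k$ with $\min B_1<\dots<\min B_k$, $rb(\pi)$ is the number of pairs $(b,B_j)$ with $b\in B_i$, $j>i$, $\max B_j>b$. Let $s(\pi)$ and $d(\pi)$ be the numbers of blocks of size $1$ and $2$. Define $F_n(x,y,q)=\sum_{\pi\in\Pi_n(13/2,123)}x^{s(\pi)}y^{d(\pi)}q^{rb(\pi)}$, so $F_0=1$ and $F_1=x$. $F_n(xq^a,yq^a,q)$ denotes the substitution $x\mapsto xq^a$, $y\mapsto yq^a$. *)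

theory Defs
  imports Main
begin

text \<open>Blocks of the layered partition determined by a composition cs (parts 1 or 2),
  listed in order of their minima; s is the number of elements already used.\<close>
fun blocks_from :: "nat \<Rightarrow> nat list \<Rightarrow> nat set list" where
  "blocks_from s [] = []"
| "blocks_from s (c # cs) = {s+1..s+c} # blocks_from (s+c) cs"

text \<open>Pi_n(13/2,123): layered matchings of [n], each given as the list B_1,...,B_k of
  its blocks ordered by increasing minimum.\<close>
definition layered_matchings :: "nat \<Rightarrow> nat set list set" where
  "layered_matchings n =
     {blocks_from 0 cs | cs. set cs \<subseteq> {1,2} \<and> sum_list cs = n}"

definition rb :: "nat set list \<Rightarrow> nat" where
  "rb Bs = card {(b, j). \<exists>i<j. j < length Bs \<and> b \<in> Bs ! i \<and> b < Max (Bs ! j)}"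

definition sblocks :: "nat set list \<Rightarrow> nat" where
  "sblocks Bs = length (filter (\<lambda>B. card B = 1) Bs)"

definition dblocks :: "nat set list \<Rightarrow> nat" where
  "dblocks Bs = length (filter (\<lambda>B. card B = 2) Bs)"

definition F :: "nat \<Rightarrow> 'a::comm_semiring_1 \<Rightarrow> 'a \<Rightarrow> 'a \<Rightarrow> 'a" where
  "F n x y q = (\<Sum>Bs\<in>layered_matchings n. x ^ sblocks Bs * y ^ dblocks Bs * q ^ rb Bs)"

end

theory Submission
  imports Defs
begin

(* A layered matching of [n] is determined by its composition cs of n into parts 1 and 2
   (the block sizes, left to right), realised by blocks_from 0 cs.  Since every block lies
   entirely to the left of each later block, rb counts, for each block j, all elements of the
   earlier blocks, so rb = sum over j of (c_1 + ... + c_(j-1)) =: comp_rb cs.  Hence F_n is a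
   weighted sum over compositions, and splitting off the first part gives the recurrence
     F_(n+2)(x,y,q) = x F_(n+1)(xq,yq,q) + y F_n(xq^2,yq^2,q),   F_0 = 1, F_1 = x.  Writing F_shift n a for
   F_n(xq^a,yq^a,q), induction on m yields the splitting identity
     F_shift (m+n+2) a = F_shift (m+1) a * F_shift (n+1) (a+m+1)
                         + y q^(a+m) F_shift m a * F_shift n (a+m+2)
   (cut a composition of m+n+2 after m+1, or inside a block {m+1,m+2}); its case n = 0 is
   the recurrence read from the last block.  The theorem follows by expanding its left-hand
   side with the first-block recurrence and comparing with the splitting identity. *)

lemma length_blocks_from [simp]: "length (blocks_from s cs) = length cs"
  by (induction cs arbitrary: s) auto

lemma map_card_blocks_from: "map card (blocks_from s cs) = cs"
  by (induction cs arbitrary: s) auto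

lemma nth_blocks_from:
  "j < length cs \<Longrightarrow>
   blocks_from s cs ! j = {s + sum_list (take j cs) <.. s + sum_list (take (Suc j) cs)}"
proof (induction cs arbitrary: s j)
  case (Cons c cs)
  then show ?case
    by (cases j) (auto simp: atLeastSucAtMost_greaterThanAtMost ac_simps)
qed simp

lemma sum_take_mono: "i \<le> j \<Longrightarrow> sum_list (take i cs) \<le> sum_list (take j (cs :: nat list))"
  by (metis le_add1 le_add_diff_inverse sum_list_append take_add)

lemma sum_take_Suc_less:
  "0 \<notin> set cs \<Longrightarrow> j < length cs \<Longrightarrow> sum_list (take j cs) < sum_list (take (Suc j) (cs :: nat list))"
proof -
  assume "0 \<notin> set cs" "j < length cs"
  then have "cs ! j \<noteq> 0" by (metis nth_mem)
  then show ?thesis using \<open>j < length cs\<close> by (simp add: take_Suc_conv_app_nth)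
qed

lemma Union_blocks_from:
  "j \<le> length cs \<Longrightarrow> (\<Union>i<j. blocks_from s cs ! i) = {s <.. s + sum_list (take j cs)}"
proof (induction j)
  case (Suc j)
  have "(\<Union>i<Suc j. blocks_from s cs ! i) = {s <.. s + sum_list (take j cs)} \<union> blocks_from s cs ! j"
    using Suc by (simp add: lessThan_Suc Un_commute)
  also have "\<dots> = {s <.. s + sum_list (take (Suc j) cs)}"
    using Suc.prems by (simp add: nth_blocks_from ivl_disj_un_two(6) sum_take_mono)
  finally show ?case .
qed simp

lemma Max_blocks_from:
  "0 \<notin> set cs \<Longrightarrow> j < length cs \<Longrightarrow> Max (blocks_from s cs ! j) = s + sum_list (take (Suc j) cs)"
  using sum_take_Suc_less[of cs j] by (simp add: nth_blocks_from) (intro Max_eqI; simp)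

(* rb of the blocks of a composition: block j is preceded by c_1 + ... + c_(j-1) elements,
   each of which forms a counted pair with it. *)
definition comp_rb :: "nat list \<Rightarrow> nat" where
  "comp_rb cs = (\<Sum>j<length cs. sum_list (take j cs))"

lemma rb_blocks_from:
  assumes "0 \<notin> set cs"
  shows "rb (blocks_from s cs) = comp_rb cs"
proof -
  let ?Bs = "blocks_from s cs" and ?T = "\<lambda>j. sum_list (take j cs)"
  have "{(b, j). \<exists>i<j. j < length ?Bs \<and> b \<in> ?Bs ! i \<and> b < Max (?Bs ! j)}
      = (\<lambda>(j, b). (b, j)) ` (SIGMA j:{..<length cs}. {s <.. s + ?T j})"
  proof (rule set_eqI, clarify)
    fix b j
    have earlier: "(\<exists>i<j. b \<in> ?Bs ! i) \<longleftrightarrow> b \<in> {s <.. s + ?T j}" if "j < length cs"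
      using Union_blocks_from[of j cs s] that by auto
    have below_Max: "b < Max (?Bs ! j)" if "j < length cs" "b \<in> {s <.. s + ?T j}"
      using that assms sum_take_Suc_less[of cs j] by (simp add: Max_blocks_from)
    show "(b, j) \<in> {(b, j). \<exists>i<j. j < length ?Bs \<and> b \<in> ?Bs ! i \<and> b < Max (?Bs ! j)}
      \<longleftrightarrow> (b, j) \<in> (\<lambda>(j, b). (b, j)) ` (SIGMA j:{..<length cs}. {s <.. s + ?T j})"
      using earlier below_Max by (auto simp: image_iff)
  qed
  then show ?thesis
    unfolding rb_def comp_rb_def by (simp add: card_image inj_on_def)
qed

definition compositions12 :: "nat \<Rightarrow> nat list set" where
  "compositions12 n = {cs. set cs \<subseteq> {1,2} \<and> sum_list cs = n}"

definition comp_weight :: "'a::comm_semiring_1 \<Rightarrow> 'a \<Rightarrow> 'a \<Rightarrow> nat list \<Rightarrow> 'a" where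
  "comp_weight x y q cs =
     x ^ length (filter (\<lambda>c. c = 1) cs) * y ^ length (filter (\<lambda>c. c = 2) cs) * q ^ comp_rb cs"

lemma F_compositions12: "F n x y q = (\<Sum>cs\<in>compositions12 n. comp_weight x y q cs)"
proof -
  have image: "layered_matchings n = blocks_from 0 ` compositions12 n"
    unfolding layered_matchings_def compositions12_def by blast
  have inj: "inj_on (blocks_from 0) (compositions12 n)"
    by (metis map_card_blocks_from inj_onI)
  have weight: "x ^ sblocks (blocks_from 0 cs) * y ^ dblocks (blocks_from 0 cs) * q ^ rb (blocks_from 0 cs)
      = comp_weight x y q cs" if "cs \<in> compositions12 n" for cs
  proof -
    have "0 \<notin> set cs" using that by (auto simp: compositions12_def)
    moreover have "length (filter (\<lambda>B. card B = k) (blocks_from 0 cs)) = length (filter (\<lambda>c. c = k) cs)"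
      for k
    proof -
      have "length (filter (\<lambda>B. card B = k) (blocks_from 0 cs))
          = length (filter (\<lambda>c. c = k) (map card (blocks_from 0 cs)))"
        by (simp add: filter_map comp_def)
      then show ?thesis by (simp only: map_card_blocks_from)
    qed
    ultimately show ?thesis
      by (simp add: comp_weight_def sblocks_def dblocks_def rb_blocks_from)
  qed
  show ?thesis
    unfolding F_def image by (simp add: sum.reindex[OF inj] weight)
qed

(* A first part c precedes every later element, contributing c for each later block. *)
lemma comp_rb_Cons: "comp_rb (c # cs) = c * length cs + comp_rb cs"
  unfolding comp_rb_def length_Cons sum.lessThan_Suc_shift by (simp add: sum.distrib)

(* Removing a first part c multiplies by its own weight and shifts x, y by q^c, because each
   of the remaining blocks gains c in its rb count. *)
lemma comp_weight_Cons:
  assumes "set cs \<subseteq> {1,2}"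
  shows "comp_weight x y q (c # cs) = comp_weight x y q [c] * comp_weight (x * q^c) (y * q^c) q cs"
proof -
  let ?a = "length (filter (\<lambda>c. c = 1) cs)" and ?b = "length (filter (\<lambda>c. c = 2) cs)"
  have "length cs = ?a + ?b"
    using assms by (induction cs) auto
  then have shift: "q ^ comp_rb (c # cs) = (q ^ c) ^ ?a * (q ^ c) ^ ?b * q ^ comp_rb cs"
    by (simp add: comp_rb_Cons power_add add_mult_distrib2 flip: power_mult)
  show ?thesis
    unfolding comp_weight_def shift by (simp add: comp_rb_def power_mult_distrib algebra_simps)
qed

lemma compositions12_0: "compositions12 0 = {[]}"
proof -
  have "cs \<in> compositions12 0 \<longleftrightarrow> cs = []" for cs
    by (cases cs) (auto simp: compositions12_def)
  then show ?thesis by auto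
qed

lemma compositions12_1: "compositions12 (Suc 0) = {[1]}"
proof -
  have empty: "set cs \<subseteq> {1,2} \<Longrightarrow> sum_list cs = 0 \<Longrightarrow> cs = []" for cs :: "nat list"
    using compositions12_0 unfolding compositions12_def by blast
  have "cs \<in> compositions12 (Suc 0) \<longleftrightarrow> cs = [1]" for cs
    using empty by (cases cs) (auto simp: compositions12_def)
  then show ?thesis by auto
qed

lemma compositions12_Suc_Suc:
  "compositions12 (Suc (Suc n)) = Cons 1 ` compositions12 (Suc n) \<union> Cons 2 ` compositions12 n"
proof -
  have "cs \<in> compositions12 (Suc (Suc n))
    \<longleftrightarrow> cs \<in> Cons 1 ` compositions12 (Suc n) \<union> Cons 2 ` compositions12 n" for cs
    by (cases cs) (auto simp: compositions12_def)
  then show ?thesis by blast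
qed

(* A composition with positive parts has at most n parts, so there are finitely many. *)
lemma finite_compositions12: "finite (compositions12 n)"
proof (rule finite_subset)
  have "length cs \<le> sum_list cs" if "0 \<notin> set cs" for cs :: "nat list"
    using that by (induction cs) (auto simp: Suc_le_eq)
  then show "compositions12 n \<subseteq> {cs. set cs \<subseteq> {1,2} \<and> length cs \<le> n}"
    unfolding compositions12_def by fastforce
  show "finite {cs. set cs \<subseteq> {1::nat,2} \<and> length cs \<le> n}"
    by (rule finite_lists_length_le) simp
qed

lemma F_0: "F 0 x y q = 1"
  by (simp add: F_compositions12 compositions12_0 comp_weight_def comp_rb_def)

lemma F_1: "F (Suc 0) x y q = x"
  by (simp add: F_compositions12 compositions12_1 comp_weight_def comp_rb_def)

lemma F_Suc_Suc:
  "F (Suc (Suc n)) x y q = x * F (Suc n) (x * q) (y * q) q + y * F n (x * q^2) (y * q^2) q"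
proof -
  have first_block: "(\<Sum>cs\<in>Cons c ` compositions12 k. comp_weight x y q cs)
      = comp_weight x y q [c] * F k (x * q^c) (y * q^c) q" for c k
  proof -
    have "(\<Sum>cs\<in>Cons c ` compositions12 k. comp_weight x y q cs)
        = (\<Sum>cs\<in>compositions12 k. comp_weight x y q (c # cs))"
      by (simp add: sum.reindex)
    also have "\<dots> = (\<Sum>cs\<in>compositions12 k. comp_weight x y q [c] * comp_weight (x * q^c) (y * q^c) q cs)"
      by (intro sum.cong refl comp_weight_Cons) (simp add: compositions12_def)
    finally show ?thesis
      by (simp add: F_compositions12 sum_distrib_left)
  qed
  have "F (Suc (Suc n)) x y q = (\<Sum>cs\<in>Cons 1 ` compositions12 (Suc n). comp_weight x y q cs)
      + (\<Sum>cs\<in>Cons 2 ` compositions12 n. comp_weight x y q cs)"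
    unfolding F_compositions12 compositions12_Suc_Suc
    by (rule sum.union_disjoint) (auto simp: finite_compositions12)
  then show ?thesis
    unfolding first_block by (simp add: comp_weight_def comp_rb_def)
qed

(* F_shift n a stands for F_n(xq^a, yq^a, q); shifting twice adds the exponents, which turns the
   first-block recurrence into a recurrence in n and a alone. *)
context
  fixes x y q :: "'a::comm_semiring_1"
begin

definition F_shift :: "nat \<Rightarrow> nat \<Rightarrow> 'a" where
  "F_shift n a = F n (x * q^a) (y * q^a) q"

lemma F_shift_0: "F_shift 0 a = 1"
  by (simp add: F_shift_def F_0)

lemma F_shift_1: "F_shift (Suc 0) a = x * q^a"
  by (simp add: F_shift_def F_1)

lemma F_shift_Suc_Suc:
  "F_shift (Suc (Suc n)) a = x * q^a * F_shift (Suc n) (Suc a) + y * q^a * F_shift n (Suc (Suc a))"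
proof -
  have "x * q^a * q = x * q^Suc a" "y * q^a * q = y * q^Suc a"
       "x * q^a * q^2 = x * q^Suc (Suc a)" "y * q^a * q^2 = y * q^Suc (Suc a)"
    by (simp_all add: algebra_simps power2_eq_square)
  then show ?thesis
    by (simp add: F_shift_def F_Suc_Suc)
qed

(* Splitting identity: a composition of m+n+2 either has m+1 as a partial sum, or has a part 2
   covering m+1 and m+2.  Proved by strong induction on m, expanding the first block. *)
lemma F_shift_split:
  "F_shift (m + n + 2) a = F_shift (m + 1) a * F_shift (n + 1) (a + m + 1)
     + y * q^(a + m) * F_shift m a * F_shift n (a + m + 2)"
proof (induction m arbitrary: a rule: less_induct)
  case (less m)
  consider "m = 0" | "m = 1" | j where "m = j + 2"
    by (metis One_nat_def add_2_eq_Suc' not0_implies_Suc)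
  then show ?case
  proof cases
    case 1
    then show ?thesis
      using F_shift_Suc_Suc[of n a] by (simp add: F_shift_0 F_shift_1 numeral_2_eq_2)
  next
    case 2
    have rec: "F_shift (m + n + 2) a = x * q^a * F_shift (n + 2) (a + 1) + y * q^a * F_shift (n + 1) (a + 2)"
      using F_shift_Suc_Suc[of "n + 1" a] 2 by (simp add: numeral_2_eq_2)
    have two: "F_shift (m + 1) a = x * q^a * F_shift 1 (a + 1) + y * q^a"
      using F_shift_Suc_Suc[of 0 a] 2 by (simp add: F_shift_0)
    have ih: "F_shift (n + 2) (a + 1) = F_shift 1 (a + 1) * F_shift (n + 1) (a + 2)
        + y * q^(a + 1) * F_shift n (a + 3)"
      using less.IH[of 0 "a + 1"] 2 by (simp add: F_shift_0 numeral_2_eq_2 numeral_3_eq_3)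
    show ?thesis
      unfolding rec ih two using 2
      by (simp add: F_shift_1 algebra_simps power_add numeral_2_eq_2 numeral_3_eq_3)
  next
    case 3
    have rec_left: "F_shift (m + n + 2) a = x * q^a * F_shift (j + n + 3) (a + 1)
        + y * q^a * F_shift (j + n + 2) (a + 2)"
      using F_shift_Suc_Suc[of "j + n + 2" a] 3 by (simp add: eval_nat_numeral)
    have rec_m1: "F_shift (m + 1) a = x * q^a * F_shift (j + 2) (a + 1) + y * q^a * F_shift (j + 1) (a + 2)"
      using F_shift_Suc_Suc[of "j + 1" a] 3 by (simp add: eval_nat_numeral)
    have rec_m: "F_shift m a = x * q^a * F_shift (j + 1) (a + 1) + y * q^a * F_shift j (a + 2)"
      using F_shift_Suc_Suc[of j a] 3 by (simp add: eval_nat_numeral)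
    have ih1: "F_shift (j + n + 3) (a + 1) = F_shift (j + 2) (a + 1) * F_shift (n + 1) (a + m + 1)
        + y * q^(a + m) * F_shift (j + 1) (a + 1) * F_shift n (a + m + 2)"
      using less.IH[of "j + 1" "a + 1"] 3 by (simp add: algebra_simps eval_nat_numeral)
    have ih2: "F_shift (j + n + 2) (a + 2) = F_shift (j + 1) (a + 2) * F_shift (n + 1) (a + m + 1)
        + y * q^(a + m) * F_shift j (a + 2) * F_shift n (a + m + 2)"
      using less.IH[of j "a + 2"] 3 by (simp add: algebra_simps eval_nat_numeral)
    show ?thesis
      unfolding rec_left ih1 ih2 rec_m1 rec_m by (simp add: algebra_simps)
  qed
qed

lemma F_shift_last:
  "F_shift (m + 2) a = x * q^(a + m + 1) * F_shift (m + 1) a + y * q^(a + m) * F_shift m a"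
  using F_shift_split[of m 0 a] by (simp add: F_shift_0 F_shift_1 algebra_simps)

end

theorem theorem4p4:
  fixes x y q :: "'a::comm_semiring_1" and m n :: nat
  assumes "m \<ge> 1" and "n \<ge> 1"
  shows "F (m+1) x y q * F (n+1) (x * q^m) (y * q^m) q =
         x * q^m * F (m+n+1) x y q
         + y^2 * q^(2*m-1) * F (m-1) x y q * F (n-1) (x * q^(m+2)) (y * q^(m+2)) q"
proof -
  obtain k where m: "m = k + 1" using assms(1) by (metis add.commute le_Suc_ex)
  obtain l where n: "n = l + 1" using assms(2) by (metis add.commute le_Suc_ex)
  let ?G = "F_shift x y q"
  have unshifted: "F j x y q = ?G j 0" for j
    by (simp add: F_shift_def)
  have first_step: "?G (l + 2) m = x * q^m * ?G (l + 1) (m + 1) + y * q^m * ?G l (m + 2)"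
    using F_shift_Suc_Suc[of x y q l m] by (simp add: eval_nat_numeral)
  have split: "?G (m + l + 2) 0 = ?G (m + 1) 0 * ?G (l + 1) (m + 1) + y * q^m * ?G m 0 * ?G l (m + 2)"
    using F_shift_split[of x y q m l 0] by simp
  have last: "?G (m + 1) 0 = x * q^m * ?G m 0 + y * q^k * ?G k 0"
    using F_shift_last[of x y q k 0] m by simp
  have "F (m+1) x y q * F (n+1) (x * q^m) (y * q^m) q = ?G (m + 1) 0 * ?G (l + 2) m"
    unfolding unshifted n by (simp add: F_shift_def)
  also have "\<dots> = x * q^m * ?G (m + l + 2) 0 + y^2 * (q^m * q^k) * ?G k 0 * ?G l (m + 2)"
    unfolding first_step split last by (simp add: algebra_simps power2_eq_square)
  also have "\<dots> = x * q^m * F (m+n+1) x y q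
         + y^2 * q^(2*m-1) * F (m-1) x y q * F (n-1) (x * q^(m+2)) (y * q^(m+2)) q"
    unfolding unshifted m n by (simp add: F_shift_def algebra_simps power_add mult_2_right)
  finally show ?thesis .
qed

end
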